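(* Let $M\ge1$, $S=\{0,1,2,\dots\}^M$, $N(n)=\{u\in\{-1,0,1\}^M: n+u\in S\}$, and let $P$ be the transition matrix of a discrete-time random walk $R$ on $S$ with $P(n,n')>0$ only if $n'-n\in N(n)$, homogeneous with respect to a partition $C=\{C_k\}_{k\in K}$ of $S$ (index function $c$), and let $Z=\{Z_j\}_{j\in J}$ be a refinement of $C$ (index function $z$), all as in the context. Consider the optimization problem in the variables $\varphi_{j,u,d,v}$, indexed by $j\in J$, $u\in N_j$, $d\in N_{j,u}$, $v\in N_{c(j,d)}$: $$\min \sum_{j\in J}\sum_{u\in N_j}\sum_{d\in N_{j,u}}\sum_{v\in N_{c(j,d)}}\varphi_{j,u,d,v}$$ subject to, for all $j\in J$, $u\in N_j$, $d\in N_{j,u}$, $$\sum_{v\in N_{c(j,d)}}\mathbf{1}(d+v\in N_{j,u})\bigl[\varphi_{j,u,d+v,-v}-\varphi_{j,u,d,v}\bigr]=p_{c(j,u),d-u}-p_{j,d},$$ and $\varphi_{j,u,d,v}\ge 0$ for all indices. Then this problem has a finite number of variables and constraints and is feasible. Moreover, if $(\varphi_{j,u,d,v})$ is an optimal solution, then the numbers defined for $n,m\in S$, $u\in N_{c(n)}$, $v\in N_{c(m)}$ by $$\phi(n,u,m,v)=\begin{cases}\varphi_{z(n),u,m-n,v}, & \text{if } m-n\in N_{z(n),u}\text{ and } m+v-n\in N_{z(n),u},\\ 0, &\text{otherwise},\end{cases}$$ are nonnegative and satisfy, for all $n,m\in S$ and $u\in N_{c(n)}$, $$\sum_{v\in 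N_{c(m)}}\bigl[\phi(n,u,m+v,-v)-\phi(n,u,m,v)\bigr]=P(n+u,m)-P(n,m).$$
   Context: A family $C=\{C_k\}_{k\in K}$, with $K$ finite, is a partition of $S$ if its sets are pairwise disjoint, cover $S$, and $N(n)=N(n')$ for all $n,n'$ in the same $C_k$; this common set is denoted $N_k$, and $c(n)$ denotes the index $k$ with $n\in C_k$. The random walk $R$ is homogeneous with respect to $C$: $P(n,n+u)=p_{c(n),u}$ for $u\in N_{c(n)}$, depending on $n$ only through $c(n)$, and $P(n,n')=0$ if $n'-n\notin N(n)$. A refinement $Z=\{Z_j\}_{j\in J}$ of $C$ is a partition of $S$ in the same sense, with finite index set $J$, index function $z$ and common transition sets $N_j$, such that for every $j\in J$ and $u\in N_j$, $c(n+u)$ is the same for all $n\in Z_j$; this common index is denoted $c(j,u)$. $R$ is then also homogeneous with respect to $Z$, and $p_{j,d}$ denotes $P(n,n+d)$ for $n\in Z_j$ (equal to $0$ if $d\notin N_j$). For $j\in J$, $u\in N_j$, let $N_{j,u}=N_j\cup(u+N_{c(j,u)})$. It is assumed (as presupposed by the notation) that for $d\in N_{j,u}$ the index $c(n+d)$ is the same for all $n\in Z_j$; it is denoted $c(j,d)$. Finally $p_{c(j,u),d-u}$ denotes $P(n+u,n+d)$ for $n\in Z_j$ (equal to $0$ if $d-u\notin N_{c(j,u)}$). *)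

theory Defs
  imports "HOL-Analysis.Analysis"
begin

text \<open>Lattice points are vectors of integers indexed by a finite type 'm (so M = CARD('m) >= 1).\<close>

definition Sgrid :: "(int^'m) set" where
  "Sgrid = {n. \<forall>i. 0 \<le> n $ i}"

definition Nb :: "int^'m \<Rightarrow> (int^'m) set" where
  "Nb n = {u. (\<forall>i. u $ i \<in> {-1, 0, 1}) \<and> n + u \<in> Sgrid}"

text \<open>A partition of S with finite index set K, given through its index function c:
  the block C_k is {n in S. c n = k}; blocks are nonempty (c maps S onto K),
  and N is constant on each block.\<close>
definition is_partition :: "'k set \<Rightarrow> (int^'m \<Rightarrow> 'k) \<Rightarrow> bool" where
  "is_partition K c \<longleftrightarrow> finite K \<and> c ` Sgrid = K \<and>
     (\<forall>n\<in>Sgrid. \<forall>n'\<in>Sgrid. c n = c n' \<longrightarrow> Nb n = Nb n')"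

definition transition_matrix :: "(int^'m \<Rightarrow> int^'m \<Rightarrow> real) \<Rightarrow> bool" where
  "transition_matrix P \<longleftrightarrow> (\<forall>n\<in>Sgrid.
     (\<forall>n'. 0 \<le> P n n') \<and> (\<forall>n'. n' - n \<notin> Nb n \<longrightarrow> P n n' = 0) \<and>
     (\<Sum>u\<in>Nb n. P n (n + u)) = 1)"

definition homogeneous :: "(int^'m \<Rightarrow> int^'m \<Rightarrow> real) \<Rightarrow> (int^'m \<Rightarrow> 'k) \<Rightarrow> bool" where
  "homogeneous P c \<longleftrightarrow> (\<forall>n\<in>Sgrid. \<forall>n'\<in>Sgrid. c n = c n' \<longrightarrow>
     (\<forall>u\<in>Nb n. P n (n + u) = P n' (n' + u)))"

definition is_refinement :: "(int^'m \<Rightarrow> 'k) \<Rightarrow> 'j set \<Rightarrow> (int^'m \<Rightarrow> 'j) \<Rightarrow> bool" where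
  "is_refinement c J z \<longleftrightarrow> is_partition J z \<and>
     (\<forall>n\<in>Sgrid. \<forall>n'\<in>Sgrid. z n = z n' \<longrightarrow> (\<forall>u\<in>Nb n. c (n + u) = c (n' + u)))"

text \<open>The standing assumption: for d in N_{j,u} = N_j \<union> (u + N_{c(j,u)}), c(n+d) is constant on Z_j.\<close>
definition refinement_coherent :: "(int^'m \<Rightarrow> 'k) \<Rightarrow> (int^'m \<Rightarrow> 'j) \<Rightarrow> bool" where
  "refinement_coherent c z \<longleftrightarrow> (\<forall>n\<in>Sgrid. \<forall>n'\<in>Sgrid. z n = z n' \<longrightarrow>
     (\<forall>u\<in>Nb n. \<forall>d\<in>Nb n \<union> (\<lambda>w. u + w) ` Nb (n + u). c (n + d) = c (n' + d)))"

definition rep :: "(int^'m \<Rightarrow> 'j) \<Rightarrow> 'j \<Rightarrow> int^'m" where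
  "rep z j = (SOME n. n \<in> Sgrid \<and> z n = j)"

definition Njd :: "(int^'m \<Rightarrow> 'j) \<Rightarrow> 'j \<Rightarrow> int^'m \<Rightarrow> (int^'m) set" where
  "Njd z j u = Nb (rep z j) \<union> (\<lambda>w. u + w) ` Nb (rep z j + u)"

definition lp_vars :: "(int^'m \<Rightarrow> 'j) \<Rightarrow> 'j set \<Rightarrow> ('j \<times> (int^'m) \<times> (int^'m) \<times> (int^'m)) set" where
  "lp_vars z J = {(j, u, d, v). j \<in> J \<and> u \<in> Nb (rep z j) \<and> d \<in> Njd z j u \<and> v \<in> Nb (rep z j + d)}"

definition lp_constraints :: "(int^'m \<Rightarrow> 'j) \<Rightarrow> 'j set \<Rightarrow> ('j \<times> (int^'m) \<times> (int^'m)) set" where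
  "lp_constraints z J = {(j, u, d). j \<in> J \<and> u \<in> Nb (rep z j) \<and> d \<in> Njd z j u}"

definition lp_objective :: "(int^'m \<Rightarrow> 'j) \<Rightarrow> 'j set
    \<Rightarrow> ('j \<Rightarrow> int^'m \<Rightarrow> int^'m \<Rightarrow> int^'m \<Rightarrow> real) \<Rightarrow> real" where
  "lp_objective z J \<phi> = (\<Sum>j\<in>J. \<Sum>u\<in>Nb (rep z j). \<Sum>d\<in>Njd z j u. \<Sum>v\<in>Nb (rep z j + d). \<phi> j u d v)"

text \<open>Feasibility. Here p_{c(j,u),d-u} = P(n+u, n+d) and p_{j,d} = P(n, n+d) for n in Z_j.\<close>
definition lp_feasible :: "(int^'m \<Rightarrow> int^'m \<Rightarrow> real) \<Rightarrow> (int^'m \<Rightarrow> 'j) \<Rightarrow> 'j set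
    \<Rightarrow> ('j \<Rightarrow> int^'m \<Rightarrow> int^'m \<Rightarrow> int^'m \<Rightarrow> real) \<Rightarrow> bool" where
  "lp_feasible P z J \<phi> \<longleftrightarrow>
     (\<forall>(j, u, d, v) \<in> lp_vars z J. 0 \<le> \<phi> j u d v) \<and>
     (\<forall>(j, u, d) \<in> lp_constraints z J.
        (\<Sum>v\<in>Nb (rep z j + d). (if d + v \<in> Njd z j u then 1 else 0) *
            (\<phi> j u (d + v) (- v) - \<phi> j u d v))
        = P (rep z j + u) (rep z j + d) - P (rep z j) (rep z j + d))"

definition lp_optimal :: "(int^'m \<Rightarrow> int^'m \<Rightarrow> real) \<Rightarrow> (int^'m \<Rightarrow> 'j) \<Rightarrow> 'j set
    \<Rightarrow> ('j \<Rightarrow> int^'m \<Rightarrow> int^'m \<Rightarrow> int^'m \<Rightarrow> real) \<Rightarrow> bool" where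
  "lp_optimal P z J \<phi> \<longleftrightarrow> lp_feasible P z J \<phi> \<and>
     (\<forall>\<psi>. lp_feasible P z J \<psi> \<longrightarrow> lp_objective z J \<phi> \<le> lp_objective z J \<psi>)"

definition phi_of :: "(int^'m \<Rightarrow> 'j) \<Rightarrow> ('j \<Rightarrow> int^'m \<Rightarrow> int^'m \<Rightarrow> int^'m \<Rightarrow> real)
    \<Rightarrow> int^'m \<Rightarrow> int^'m \<Rightarrow> int^'m \<Rightarrow> int^'m \<Rightarrow> real" where
  "phi_of z \<phi> n u m v =
     (if m - n \<in> Njd z (z n) u \<and> m + v - n \<in> Njd z (z n) u
      then \<phi> (z n) u (m - n) v else 0)"

end

theory Submission
  imports Defs
begin

text \<open>
  Fix a block representative r = rep z j and a step u \<in> N(r). The constraints of the linear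
  program say that \<phi> j u is a nonnegative flow on the graph with vertices N_{j,u} and edges
  d \<rightarrow> d + v, whose net inflow at d is P(r+u, r+d) - P(r, r+d). Such a flow exists: collect the
  mass P(r, r+a) from each a \<in> N(r) at 0, move the unit mass from 0 to u, and spread it from u
  to u + w with weights P(r+u, r+u+w). Homogeneity and the coherence of the refinement make the
  graph and the demands the same for every n in the block of r, so every feasible solution yields the balance equations at n; for m - n outside N_{z(n),u}
  both sides vanish.
\<close>

lemma finite_Nb: "finite (Nb n)"
proof (rule finite_subset)
  show "Nb n \<subseteq> vec_lambda ` (UNIV \<rightarrow>\<^sub>E {-1, 0, 1 :: int})"
  proof
    fix u assume "u \<in> Nb n"
    then have "vec_nth u \<in> UNIV \<rightarrow>\<^sub>E {-1, 0, 1}" by (auto simp: Nb_def)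
    then show "u \<in> vec_lambda ` (UNIV \<rightarrow>\<^sub>E {-1, 0, 1})" by (metis image_eqI vec_nth_inverse)
  qed
qed (simp add: finite_PiE)

lemma zero_in_Nb: "n \<in> Sgrid \<Longrightarrow> 0 \<in> Nb n"
  unfolding Nb_def by simp

lemma add_in_Sgrid_if_in_Nb: "u \<in> Nb n \<Longrightarrow> n + u \<in> Sgrid"
  unfolding Nb_def by simp

lemma uminus_in_Nb: "n \<in> Sgrid \<Longrightarrow> u \<in> Nb n \<Longrightarrow> - u \<in> Nb (n + u)"
  unfolding Nb_def by auto

lemma finite_Njd: "finite (Njd z j u)"
  unfolding Njd_def by (simp add: finite_Nb)

lemma finite_lp_vars: "finite J \<Longrightarrow> finite (lp_vars z J)"
proof -
  assume "finite J"
  moreover have "lp_vars z J = (SIGMA j:J. SIGMA u:Nb (rep z j). SIGMA d:Njd z j u. Nb (rep z j + d))"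
    unfolding lp_vars_def by auto
  ultimately show ?thesis by (simp add: finite_Nb finite_Njd)
qed

lemma finite_lp_constraints: "finite J \<Longrightarrow> finite (lp_constraints z J)"
proof -
  assume "finite J"
  moreover have "lp_constraints z J = (SIGMA j:J. SIGMA u:Nb (rep z j). Njd z j u)"
    unfolding lp_constraints_def by auto
  ultimately show ?thesis by (simp add: finite_Nb finite_Njd)
qed

lemma transition_matrix_nonneg: "transition_matrix P \<Longrightarrow> n \<in> Sgrid \<Longrightarrow> 0 \<le> P n m"
  unfolding transition_matrix_def by blast

lemma transition_matrix_eq_0: "transition_matrix P \<Longrightarrow> n \<in> Sgrid \<Longrightarrow> m - n \<notin> Nb n \<Longrightarrow> P n m = 0"
  unfolding transition_matrix_def by blast

lemma transition_matrix_row_sum: "transition_matrix P \<Longrightarrow> n \<in> Sgrid \<Longrightarrow> (\<Sum>u\<in>Nb n. P n (n + u)) = 1"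
  unfolding transition_matrix_def by blast

lemma transition_matrix_sum_indicator:
  assumes "transition_matrix P" "n \<in> Sgrid"
  shows "(\<Sum>u\<in>Nb n. P n (n + u) * of_bool (m = n + u)) = P n m"
proof -
  have "(\<Sum>u\<in>Nb n. P n (n + u) * of_bool (m = n + u)) = (\<Sum>u\<in>Nb n. if u = m - n then P n m else 0)"
    by (rule sum.cong) auto
  also have "\<dots> = P n m"
    using transition_matrix_eq_0[OF assms] by (simp add: finite_Nb)
  finally show ?thesis .
qed

definition net_inflow :: "int^'m \<Rightarrow> (int^'m) set \<Rightarrow> (int^'m \<Rightarrow> int^'m \<Rightarrow> real) \<Rightarrow> int^'m \<Rightarrow> real" where
  "net_inflow r D \<psi> d = (\<Sum>v\<in>Nb (r + d). (if d + v \<in> D then 1 else 0) * (\<psi> (d + v) (- v) - \<psi> d v))"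

lemma net_inflow_add:
  "net_inflow r D (\<lambda>d v. \<psi> d v + \<psi>' d v) d = net_inflow r D \<psi> d + net_inflow r D \<psi>' d"
  unfolding net_inflow_def by (simp add: sum.distrib[symmetric] algebra_simps)

lemma net_inflow_sum:
  "net_inflow r D (\<lambda>d v. \<Sum>i\<in>I. p i * \<psi> i d v) d = (\<Sum>i\<in>I. p i * net_inflow r D (\<psi> i) d)"
  unfolding net_inflow_def
  by (simp add: sum_distrib_left sum_subtractf[symmetric] algebra_simps sum.swap[of _ I])

definition unit_edge_flow :: "int^'m \<Rightarrow> int^'m \<Rightarrow> int^'m \<Rightarrow> int^'m \<Rightarrow> real" where
  "unit_edge_flow a w d v = of_bool (d = a \<and> v = w)"

lemma net_inflow_unit_edge_flow:
  assumes "r + a \<in> Sgrid" "w \<in> Nb (r + a)" "a \<in> D" "a + w \<in> D"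
  shows "net_inflow r D (unit_edge_flow a w) d = of_bool (d = a + w) - of_bool (d = a)"
proof -
  have "net_inflow r D (unit_edge_flow a w) d
      = (\<Sum>v\<in>Nb (r + d). of_bool (v = - w \<and> d = a + w)) - (\<Sum>v\<in>Nb (r + d). of_bool (v = w \<and> d = a))"
    unfolding net_inflow_def sum_subtractf[symmetric]
    by (rule sum.cong) (use assms(3,4) in \<open>auto simp: unit_edge_flow_def\<close>)
  also have "\<dots> = of_bool (d = a + w) - of_bool (d = a)"
    using uminus_in_Nb[OF assms(1,2)] assms(2) by (auto simp: finite_Nb add.assoc)
  finally show ?thesis .
qed

definition transfer_flow :: "(int^'m \<Rightarrow> int^'m \<Rightarrow> real) \<Rightarrow> int^'m \<Rightarrow> int^'m \<Rightarrow> int^'m \<Rightarrow> int^'m \<Rightarrow> real" where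
  "transfer_flow P r u d v =
     (\<Sum>a\<in>Nb r. P r (r + a) * unit_edge_flow a (- a) d v)
     + unit_edge_flow 0 u d v
     + (\<Sum>w\<in>Nb (r + u). P (r + u) (r + u + w) * unit_edge_flow u w d v)"

lemma transfer_flow_nonneg:
  assumes tm: "transition_matrix P" and r: "r \<in> Sgrid" and u: "u \<in> Nb r"
  shows "0 \<le> transfer_flow P r u d v"
proof -
  have "r + u \<in> Sgrid"
    using u by (rule add_in_Sgrid_if_in_Nb)
  then show ?thesis
    using transition_matrix_nonneg[OF tm r] transition_matrix_nonneg[OF tm]
    unfolding transfer_flow_def unit_edge_flow_def by (simp add: sum_nonneg)
qed

lemma net_inflow_transfer_flow:
  assumes tm: "transition_matrix P" and r: "r \<in> Sgrid" and u: "u \<in> Nb r"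
  defines "D \<equiv> Nb r \<union> (+) u ` Nb (r + u)"
  shows "net_inflow r D (transfer_flow P r u) d = P (r + u) (r + d) - P r (r + d)"
proof -
  have ru: "r + u \<in> Sgrid"
    using u by (rule add_in_Sgrid_if_in_Nb)
  have collect: "net_inflow r D (\<lambda>d v. \<Sum>a\<in>Nb r. P r (r + a) * unit_edge_flow a (- a) d v) d
      = of_bool (d = 0) - P r (r + d)"
  proof -
    have "net_inflow r D (\<lambda>d v. \<Sum>a\<in>Nb r. P r (r + a) * unit_edge_flow a (- a) d v) d
        = (\<Sum>a\<in>Nb r. P r (r + a) * (of_bool (d = 0) - of_bool (r + d = r + a)))"
      unfolding net_inflow_sum
      using r zero_in_Nb[OF r]
      by (intro sum.cong refl)
        (simp add: net_inflow_unit_edge_flow add_in_Sgrid_if_in_Nb uminus_in_Nb D_def)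
    also have "\<dots> = (\<Sum>a\<in>Nb r. P r (r + a)) * of_bool (d = 0)
        - (\<Sum>a\<in>Nb r. P r (r + a) * of_bool (r + d = r + a))"
      by (simp add: right_diff_distrib sum_subtractf flip: sum_distrib_right)
    finally show ?thesis
      using transition_matrix_row_sum[OF tm r] transition_matrix_sum_indicator[OF tm r, of "r + d"]
      by simp
  qed
  have move: "net_inflow r D (unit_edge_flow 0 u) d = of_bool (d = u) - of_bool (d = 0)"
    using net_inflow_unit_edge_flow[of r 0 u D d] r u zero_in_Nb[OF r] by (simp add: D_def)
  have spread: "net_inflow r D (\<lambda>d v. \<Sum>w\<in>Nb (r + u). P (r + u) (r + u + w) * unit_edge_flow u w d v) d
      = P (r + u) (r + d) - of_bool (d = u)"
  proof -
    have "net_inflow r D (\<lambda>d v. \<Sum>w\<in>Nb (r + u). P (r + u) (r + u + w) * unit_edge_flow u w d v) d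
        = (\<Sum>w\<in>Nb (r + u). P (r + u) (r + u + w) * (of_bool (r + d = r + u + w) - of_bool (d = u)))"
      unfolding net_inflow_sum
      using ru u
      by (intro sum.cong refl) (simp add: net_inflow_unit_edge_flow D_def add.assoc)
    also have "\<dots> = (\<Sum>w\<in>Nb (r + u). P (r + u) (r + u + w) * of_bool (r + d = r + u + w))
        - (\<Sum>w\<in>Nb (r + u). P (r + u) (r + u + w)) * of_bool (d = u)"
      by (simp add: right_diff_distrib sum_subtractf flip: sum_distrib_right)
    finally show ?thesis
      using transition_matrix_row_sum[OF tm ru] transition_matrix_sum_indicator[OF tm ru, of "r + d"]
      by (simp add: add.assoc)
  qed
  show ?thesis
    unfolding transfer_flow_def net_inflow_add collect move spread by simp
qed

lemma lp_feasible_iff_net_inflow: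
  "lp_feasible P z J \<phi> \<longleftrightarrow>
     (\<forall>(j, u, d, v) \<in> lp_vars z J. 0 \<le> \<phi> j u d v) \<and>
     (\<forall>(j, u, d) \<in> lp_constraints z J. net_inflow (rep z j) (Njd z j u) (\<phi> j u) d
        = P (rep z j + u) (rep z j + d) - P (rep z j) (rep z j + d))"
  unfolding lp_feasible_def net_inflow_def ..

lemma lp_feasible_nonneg:
  "lp_feasible P z J \<phi> \<Longrightarrow> (j, u, d, v) \<in> lp_vars z J \<Longrightarrow> 0 \<le> \<phi> j u d v"
  unfolding lp_feasible_def by fastforce

lemma lp_feasible_net_inflow:
  "lp_feasible P z J \<phi> \<Longrightarrow> (j, u, d) \<in> lp_constraints z J \<Longrightarrow>
    net_inflow (rep z j) (Njd z j u) (\<phi> j u) d = P (rep z j + u) (rep z j + d) - P (rep z j) (rep z j + d)"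
  unfolding lp_feasible_iff_net_inflow by fastforce

lemma lp_feasible_transfer_flow:
  assumes tm: "transition_matrix P" and rep: "\<forall>j\<in>J. rep z j \<in> Sgrid"
  shows "lp_feasible P z J (\<lambda>j. transfer_flow P (rep z j))"
  unfolding lp_feasible_iff_net_inflow
proof (intro conjI ballI)
  fix x assume "x \<in> lp_vars z J"
  then show "case x of (j, u, d, v) \<Rightarrow> 0 \<le> transfer_flow P (rep z j) u d v"
    using rep by (auto simp: lp_vars_def intro: transfer_flow_nonneg[OF tm])
next
  fix x assume "x \<in> lp_constraints z J"
  then show "case x of (j, u, d) \<Rightarrow> net_inflow (rep z j) (Njd z j u) (transfer_flow P (rep z j) u) d
      = P (rep z j + u) (rep z j + d) - P (rep z j) (rep z j + d)"
    using rep unfolding Njd_def by (auto simp: lp_constraints_def intro: net_inflow_transfer_flow[OF tm])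
qed

lemma rep_in_Sgrid: "n \<in> Sgrid \<Longrightarrow> rep z (z n) \<in> Sgrid"
  and z_rep: "n \<in> Sgrid \<Longrightarrow> z (rep z (z n)) = z n"
  unfolding rep_def by (metis (mono_tags, lifting) someI)+

lemma rep_add_Njd_in_Sgrid: "d \<in> Njd z j u \<Longrightarrow> rep z j + d \<in> Sgrid"
  unfolding Njd_def using add_in_Sgrid_if_in_Nb by (force simp: add.assoc)

locale refined_walk =
  fixes P :: "int^'m \<Rightarrow> int^'m \<Rightarrow> real"
    and K :: "'k set" and c :: "int^'m \<Rightarrow> 'k"
    and J :: "'j set" and z :: "int^'m \<Rightarrow> 'j"
  assumes transition_matrix: "transition_matrix P"
    and partition: "is_partition K c"
    and homogeneous: "homogeneous P c"
    and refinement: "is_refinement c J z"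
    and coherent: "refinement_coherent c z"
begin

lemma finite_blocks: "finite J"
  using refinement by (simp add: is_refinement_def is_partition_def)

lemma rep_in_Sgrid_if_in_blocks: "j \<in> J \<Longrightarrow> rep z j \<in> Sgrid"
  using refinement rep_in_Sgrid unfolding is_refinement_def is_partition_def by blast

lemma Nb_eq_if_same_class:
  "n \<in> Sgrid \<Longrightarrow> n' \<in> Sgrid \<Longrightarrow> c n = c n' \<Longrightarrow> Nb n = Nb n'"
  using partition unfolding is_partition_def by blast

lemma Nb_eq_if_same_block:
  "n \<in> Sgrid \<Longrightarrow> n' \<in> Sgrid \<Longrightarrow> z n = z n' \<Longrightarrow> Nb n = Nb n'"
  using refinement unfolding is_refinement_def is_partition_def by blast

lemma class_add_eq_if_same_block:
  "n \<in> Sgrid \<Longrightarrow> n' \<in> Sgrid \<Longrightarrow> z n = z n' \<Longrightarrow> u \<in> Nb n \<Longrightarrow> c (n + u) = c (n' + u)"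
  using refinement unfolding is_refinement_def by blast

lemma class_add_Njd_eq_if_same_block:
  "n \<in> Sgrid \<Longrightarrow> n' \<in> Sgrid \<Longrightarrow> z n = z n' \<Longrightarrow> u \<in> Nb n \<Longrightarrow>
    d \<in> Nb n \<union> (+) u ` Nb (n + u) \<Longrightarrow> c (n + d) = c (n' + d)"
  using coherent unfolding refinement_coherent_def by blast

lemma step_prob_eq_if_same_class:
  assumes "n \<in> Sgrid" "n' \<in> Sgrid" "c n = c n'"
  shows "P n (n + e) = P n' (n' + e)"
proof (cases "e \<in> Nb n")
  case True
  then show ?thesis
    using homogeneous assms unfolding homogeneous_def by blast
next
  case False
  then have "e \<notin> Nb n'"
    using Nb_eq_if_same_class[OF assms] by simp
  then show ?thesis
    using False transition_matrix_eq_0[OF transition_matrix] assms(1,2) by simp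
qed

lemma Nb_rep: "n \<in> Sgrid \<Longrightarrow> Nb (rep z (z n)) = Nb n"
  using Nb_eq_if_same_block rep_in_Sgrid z_rep by blast

lemma class_rep_add: "n \<in> Sgrid \<Longrightarrow> u \<in> Nb n \<Longrightarrow> c (rep z (z n) + u) = c (n + u)"
  using class_add_eq_if_same_block rep_in_Sgrid z_rep by metis

lemma Njd_eq:
  assumes n: "n \<in> Sgrid" and u: "u \<in> Nb n"
  shows "Njd z (z n) u = Nb n \<union> (+) u ` Nb (n + u)"
proof -
  have "Nb (rep z (z n) + u) = Nb (n + u)"
  proof (rule Nb_eq_if_same_class)
    show "rep z (z n) + u \<in> Sgrid" "n + u \<in> Sgrid"
      using u Nb_rep[OF n] add_in_Sgrid_if_in_Nb by auto
    show "c (rep z (z n) + u) = c (n + u)"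
      using n u by (rule class_rep_add)
  qed
  then show ?thesis
    unfolding Njd_def Nb_rep[OF n] by simp
qed

lemma Nb_rep_add:
  assumes n: "n \<in> Sgrid" and u: "u \<in> Nb n" and d: "d \<in> Njd z (z n) u"
  shows "Nb (rep z (z n) + d) = Nb (n + d)"
proof (rule Nb_eq_if_same_class)
  show "rep z (z n) + d \<in> Sgrid"
    using d by (rule rep_add_Njd_in_Sgrid)
  show "n + d \<in> Sgrid"
    using d add_in_Sgrid_if_in_Nb[of _ n] add_in_Sgrid_if_in_Nb[of _ "n + u"]
    unfolding Njd_eq[OF n u] by (auto simp: add.assoc)
  show "c (rep z (z n) + d) = c (n + d)"
    using class_add_Njd_eq_if_same_block[OF n rep_in_Sgrid[OF n] z_rep[OF n, symmetric] u] d
    unfolding Njd_eq[OF n u] by simp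
qed

lemma step_prob_rep:
  assumes n: "n \<in> Sgrid" and u: "u \<in> Nb n"
  shows "P (rep z (z n)) (rep z (z n) + d) = P n (n + d)"
    and "P (rep z (z n) + u) (rep z (z n) + d) = P (n + u) (n + d)"
proof -
  have "c (rep z (z n)) = c n"
    using class_rep_add[OF n zero_in_Nb[OF n]] by simp
  then show "P (rep z (z n)) (rep z (z n) + d) = P n (n + d)"
    by (rule step_prob_eq_if_same_class[OF rep_in_Sgrid[OF n] n])
  have "rep z (z n) + u \<in> Sgrid" "n + u \<in> Sgrid"
    using u Nb_rep[OF n] add_in_Sgrid_if_in_Nb by auto
  moreover have "c (rep z (z n) + u) = c (n + u)"
    using n u by (rule class_rep_add)
  ultimately have "P (rep z (z n) + u) (rep z (z n) + u + (d - u)) = P (n + u) (n + u + (d - u))"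
    by (rule step_prob_eq_if_same_class)
  then show "P (rep z (z n) + u) (rep z (z n) + d) = P (n + u) (n + d)"
    by (simp add: algebra_simps)
qed

lemma block_in_blocks: "n \<in> Sgrid \<Longrightarrow> z n \<in> J"
  using refinement unfolding is_refinement_def is_partition_def by blast

lemma phi_of_nonneg:
  assumes feasible: "lp_feasible P z J \<phi>" and n: "n \<in> Sgrid" and u: "u \<in> Nb n" and v: "v \<in> Nb m"
  shows "0 \<le> phi_of z \<phi> n u m v"
proof (cases "m - n \<in> Njd z (z n) u \<and> m + v - n \<in> Njd z (z n) u")
  case True
  then have "v \<in> Nb (rep z (z n) + (m - n))"
    using v Nb_rep_add[OF n u] by simp
  then have "(z n, u, m - n, v) \<in> lp_vars z J"
    using True u block_in_blocks[OF n] Nb_rep[OF n] unfolding lp_vars_def by simp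
  then show ?thesis
    using lp_feasible_nonneg[OF feasible] True unfolding phi_of_def by simp
qed (auto simp: phi_of_def)

lemma transition_eq_0_outside_Njd:
  assumes n: "n \<in> Sgrid" and u: "u \<in> Nb n" and outside: "m - n \<notin> Njd z (z n) u"
  shows "P n m = 0" and "P (n + u) m = 0"
proof -
  show "P n m = 0"
    using outside transition_matrix_eq_0[OF transition_matrix n] unfolding Njd_eq[OF n u] by blast
  have "m - (n + u) \<notin> Nb (n + u)"
  proof
    assume "m - (n + u) \<in> Nb (n + u)"
    then have "u + (m - (n + u)) \<in> Njd z (z n) u"
      unfolding Njd_eq[OF n u] by blast
    with outside show False
      by (simp add: algebra_simps)
  qed
  then show "P (n + u) m = 0"
    using transition_matrix_eq_0[OF transition_matrix add_in_Sgrid_if_in_Nb[OF u]] by blast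
qed

lemma phi_of_balance:
  assumes feasible: "lp_feasible P z J \<phi>" and n: "n \<in> Sgrid" and u: "u \<in> Nb n"
  shows "(\<Sum>v\<in>Nb m. phi_of z \<phi> n u (m + v) (- v) - phi_of z \<phi> n u m v) = P (n + u) m - P n m"
proof -
  define d where "d = m - n"
  have m: "m = n + d"
    unfolding d_def by simp
  show ?thesis
  proof (cases "d \<in> Njd z (z n) u")
    case True
    have "(\<Sum>v\<in>Nb m. phi_of z \<phi> n u (m + v) (- v) - phi_of z \<phi> n u m v)
        = net_inflow (rep z (z n)) (Njd z (z n) u) (\<phi> (z n) u) d"
      unfolding net_inflow_def Nb_rep_add[OF n u True] m
      by (rule sum.cong) (simp_all add: phi_of_def True add.assoc)
    also have "\<dots> = P (rep z (z n) + u) (rep z (z n) + d) - P (rep z (z n)) (rep z (z n) + d)"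
    proof (rule lp_feasible_net_inflow[OF feasible])
      show "(z n, u, d) \<in> lp_constraints z J"
        using True u block_in_blocks[OF n] Nb_rep[OF n] unfolding lp_constraints_def by simp
    qed
    also have "\<dots> = P (n + u) m - P n m"
      unfolding step_prob_rep[OF n u] m ..
    finally show ?thesis .
  next
    case False
    then have "phi_of z \<phi> n u (m + v) (- v) = 0" "phi_of z \<phi> n u m v = 0" for v
      unfolding phi_of_def m by (simp_all add: add.assoc)
    then show ?thesis
      using transition_eq_0_outside_Njd[OF n u] False unfolding d_def by simp
  qed
qed

end

theorem theorem3:
  fixes P :: "int^'m \<Rightarrow> int^'m \<Rightarrow> real"
    and K :: "'k set" and c :: "int^'m \<Rightarrow> 'k"
    and J :: "'j set" and z :: "int^'m \<Rightarrow> 'j"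
  assumes "transition_matrix P"
    and "is_partition K c"
    and "homogeneous P c"
    and "is_refinement c J z"
    and "refinement_coherent c z"
  shows "finite (lp_vars z J) \<and> finite (lp_constraints z J) \<and>
         (\<exists>\<phi>. lp_feasible P z J \<phi>) \<and>
         (\<forall>\<phi>. lp_optimal P z J \<phi> \<longrightarrow>
            (\<forall>n\<in>Sgrid. \<forall>m\<in>Sgrid. \<forall>u\<in>Nb n. \<forall>v\<in>Nb m. 0 \<le> phi_of z \<phi> n u m v) \<and>
            (\<forall>n\<in>Sgrid. \<forall>m\<in>Sgrid. \<forall>u\<in>Nb n.
               (\<Sum>v\<in>Nb m. phi_of z \<phi> n u (m + v) (- v) - phi_of z \<phi> n u m v)
               = P (n + u) m - P n m))"
proof -
  interpret refined_walk P K c J z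
    by (rule refined_walk.intro[OF assms])
  have "lp_feasible P z J (\<lambda>j. transfer_flow P (rep z j))"
    using rep_in_Sgrid_if_in_blocks by (simp add: lp_feasible_transfer_flow[OF assms(1)])
  moreover have "lp_optimal P z J \<phi> \<Longrightarrow> lp_feasible P z J \<phi>" for \<phi>
    unfolding lp_optimal_def by simp
  ultimately show ?thesis
    by (auto simp: finite_lp_vars[OF finite_blocks] finite_lp_constraints[OF finite_blocks]
        phi_of_nonneg phi_of_balance)
qed

end
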